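(* Let $r\in(0,\pi/2)$. There exist $\varepsilon=\varepsilon(r)>0$ and $c=c(r)>0$ with the following property. Let $h\in S^2_+\cap E_r(S^1)$, and let $\eta\in L^2_0(\mathbb{R})$ and $f\in E(S^1)$ satisfy $\max\{\|f-h\|_\infty,\|\eta\|_\infty\}\le\varepsilon$. Then \[ \int_0^\pi\int_\alpha^\pi p_{\alpha,\beta}(f)\sin(\Delta^h_{\alpha,\beta}+\Delta^\eta_{\alpha,\beta})(\Delta^v_{\alpha,\beta})^2\,d\beta\,d\alpha\ge c\|v\|_2^2 \] for all $v\in L^2_0(\mathbb{R})$.
   Context: $E(S^1)$ is the set of $1$-Lipschitz $f:\mathbb{R}\to\mathbb{R}$ (write $f_\alpha=f(\alpha)$) with $f_{\alpha+\pi}+f_\alpha=\pi$ for all $\alpha$, with the sup norm. $S^1\subset E(S^1)$ is the set of functions $\alpha\mapsto\arccos(\cos(\alpha-\tau))$. $S^2_+\subset E(S^1)$ is the set of functions $\alpha\mapsto\arccos(\cos(d)\cos(\alpha-\tau))$ with $\tau\in\mathbb{R}$, $d\in[0,\pi/2]$. $E_r(S^1)=\{f\in E(S^1):f_\alpha\in[r,\pi-r]\ \forall\alpha\}$. For $f\in E(S^1)\setminus S^1$ (values in $(0,\pi)$) and $\beta-\alpha\notin\pi\mathbb{Z}$, \[ p_{\alpha,\beta}(f)=\frac{1-\cos(\beta-\alpha)^2-\cos(f_\alpha)^2-\cos(f_\beta)^2+2\cos(\beta-\alpha)\cos(f_\alpha)\cos(f_\beta)}{\sin(\beta-\alpha)^2\sin(f_\alpha)^2\sin(f_\beta)^2}.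 \] For $h_\alpha=\arccos(\cos(d)\cos(\alpha-\tau))$ in $S^2_+\setminus S^1$, let $p_\alpha(h)=\sin(d)/\sin(h_\alpha)^2$. Let $\nu_h:\mathbb{R}\to\mathbb{R}$ be the unique Lipschitz function with $\nu_h(0)=0$ and $\nu_h'(\alpha)=p_\alpha(h)$. Set $\Delta^h_{\alpha,\beta}=\nu_h(\beta)-\nu_h(\alpha)$ and $\Delta^\eta_{\alpha,\beta}=\eta(\beta)-\eta(\alpha)$. $L^2_0(\mathbb{R})$ is the space of $\pi$-periodic $\eta\in L^2_{\rm loc}(\mathbb{R})$ with $\int_0^\pi\eta=0$, with norm $\|\eta\|_2^2=\pi\int_0^\pi\eta(t)^2\,dt$. *)

theory Defs
  imports "HOL-Analysis.Analysis"
begin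

definition E_S1 :: "(real \<Rightarrow> real) set" where
  "E_S1 = {f. lipschitz_on 1 UNIV f \<and> (\<forall>a. f (a + pi) + f a = pi)}"

definition S1 :: "(real \<Rightarrow> real) set" where
  "S1 = {f. \<exists>\<tau>. f = (\<lambda>a. arccos (cos (a - \<tau>)))}"

definition S2_plus :: "(real \<Rightarrow> real) set" where
  "S2_plus = {h. \<exists>\<tau> d. d \<in> {0..pi/2} \<and> h = (\<lambda>a. arccos (cos d * cos (a - \<tau>)))}"

definition E_r :: "real \<Rightarrow> (real \<Rightarrow> real) set" where
  "E_r r = {f \<in> E_S1. \<forall>a. f a \<in> {r..pi - r}}"

definition p2 :: "(real \<Rightarrow> real) \<Rightarrow> real \<Rightarrow> real \<Rightarrow> real" where
  "p2 f a b =
     (1 - cos (b - a) ^ 2 - cos (f a) ^ 2 - cos (f b) ^ 2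
        + 2 * cos (b - a) * cos (f a) * cos (f b))
     / (sin (b - a) ^ 2 * sin (f a) ^ 2 * sin (f b) ^ 2)"

text \<open>The parameter d of h in S^2_+ (uniquely determined by h).\<close>
definition hd :: "(real \<Rightarrow> real) \<Rightarrow> real" where
  "hd h = (THE d. d \<in> {0..pi/2} \<and> (\<exists>\<tau>. h = (\<lambda>a. arccos (cos d * cos (a - \<tau>)))))"

definition p1 :: "(real \<Rightarrow> real) \<Rightarrow> real \<Rightarrow> real" where
  "p1 h a = sin (hd h) / sin (h a) ^ 2"

definition nu :: "(real \<Rightarrow> real) \<Rightarrow> real \<Rightarrow> real" where
  "nu h = (THE \<nu>. (\<exists>L. lipschitz_on L UNIV \<nu>) \<and> \<nu> 0 = 0 \<and>
                   (\<forall>a. (\<nu> has_real_derivative p1 h a) (at a)))"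

definition L2_0 :: "(real \<Rightarrow> real) set" where
  "L2_0 = {\<eta>. \<eta> \<in> borel_measurable lborel \<and> (\<forall>t. \<eta> (t + pi) = \<eta> t) \<and>
              set_integrable lborel {0..pi} (\<lambda>t. (\<eta> t)\<^sup>2) \<and>
              (LBINT t:{0..pi}. \<eta> t) = 0}"

definition L2norm :: "(real \<Rightarrow> real) \<Rightarrow> real" where
  "L2norm \<eta> = sqrt (pi * (LBINT t:{0..pi}. (\<eta> t)\<^sup>2))"

end

theory Submission
  imports Defs
begin

(*
  Write h = S2_fun d \<tau> with r \<le> d \<le> pi/2. Then \<nu>_h is an explicit antiderivative of
  sin d / (sin d ^ 2 cos (t - \<tau>) ^ 2 + sin (t - \<tau>) ^ 2) \<in> [sin d, 1 / sin d] which gains exactly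
  pi over a period, so for 0 \<le> b - a \<le> pi its increment lies in
  [sin r (b - a), pi - sin r (pi - (b - a))].
  The numerator of p_{a,b}(f) is a Gram determinant; it factors as
  (cos (f a - f b) - cos (b - a)) (cos (b - a) - cos (f a + f b)), and the Lipschitz and antipodal
  conditions on f make both factors nonnegative. Hence p(f) is bounded and, for f uniformly
  \<epsilon>-close to h, at least sin d ^ 2 sin (b - a) ^ 2 - 8 \<epsilon>.
  So the kernel p(f) sin (\<Delta>\<nu> + \<Delta>\<eta>) is at least some k > 0 when a and b are \<delta>-far apart
  modulo pi, and at least -k everywhere once \<epsilon> is small. For mean-zero v the integral of (v b - v a)^2
  over 0 \<le> a \<le> b \<le> pi is pi times the integral of v^2, while the \<delta>-close pairs contribute at
  most 12 \<delta> times it; \<delta> = pi/48 gives the bound with c = k/2.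
*)

lemma DERIV_bounds_imp_increment_bounds:
  fixes g g' :: "real \<Rightarrow> real"
  assumes "\<And>x. (g has_real_derivative g' x) (at x)" "\<And>x. m \<le> g' x" "\<And>x. g' x \<le> M" "a \<le> b"
  shows "m * (b - a) \<le> g b - g a \<and> g b - g a \<le> M * (b - a)"
proof (cases "a = b")
  case False
  with MVT2[of a b g g'] assms obtain z where "g b - g a = (b - a) * g' z"
    by fastforce
  moreover have "m * (b - a) \<le> (b - a) * g' z" "(b - a) * g' z \<le> M * (b - a)"
    using assms(2,3)[of z] \<open>a \<le> b\<close> by (simp_all add: mult.commute mult_right_mono)
  ultimately show ?thesis by simp
qed simp

lemma cos_lipschitz: fixes x y :: real shows "\<bar>cos x - cos y\<bar> \<le> \<bar>x - y\<bar>"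
proof -
  have "\<bar>cos x - cos y\<bar> = 2 * \<bar>sin ((x + y) / 2)\<bar> * \<bar>sin ((y - x) / 2)\<bar>"
    by (simp add: cos_diff_cos abs_mult)
  also have "\<dots> \<le> 2 * 1 * \<bar>(y - x) / 2\<bar>"
    by (intro mult_mono abs_sin_x_le_abs_x) auto
  finally show ?thesis by simp
qed

lemma cos_le_cos_of_abs_le:
  fixes w t :: real
  assumes "\<bar>w\<bar> \<le> t" "t \<le> pi"
  shows "cos t \<le> cos w"
proof -
  have "cos w = cos \<bar>w\<bar>" by (simp add: abs_if)
  then show ?thesis using cos_monotone_0_pi_le[of "\<bar>w\<bar>" t] assms by simp
qed

lemma sin_ge_sin_margin:
  fixes m x :: real
  assumes "0 \<le> m" "m \<le> x" "x \<le> pi - m"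
  shows "sin m \<le> sin x"
  using cos_le_cos_of_abs_le[of "x - pi/2" "pi/2 - m"] assms by (simp add: cos_diff abs_le_iff)

lemma sin_add_ge_neg_abs:
  fixes x y :: real
  assumes "0 \<le> x" "x \<le> pi" "\<bar>y\<bar> \<le> pi/2"
  shows "- \<bar>y\<bar> \<le> sin (x + y)"
proof -
  have "0 \<le> sin x * cos y" using assms by (intro mult_nonneg_nonneg sin_ge_zero cos_ge_zero) auto
  moreover have "\<bar>cos x * sin y\<bar> \<le> 1 * \<bar>y\<bar>"
    unfolding abs_mult by (intro mult_mono abs_sin_x_le_abs_x) auto
  ultimately show ?thesis unfolding sin_add by linarith
qed

lemma weighted_cos_sin_sq_bounds:
  fixes s u :: real
  assumes "0 \<le> s" "s \<le> 1"
  shows "s \<le> s * (cos u)\<^sup>2 + (sin u)\<^sup>2" "s * (cos u)\<^sup>2 + (sin u)\<^sup>2 \<le> 1"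
proof -
  have e1: "s * (cos u)\<^sup>2 + (sin u)\<^sup>2 = s + (1 - s) * (sin u)\<^sup>2"
    and e2: "s * (cos u)\<^sup>2 + (sin u)\<^sup>2 = 1 - (1 - s) * (cos u)\<^sup>2"
    using sin_cos_squared_add[of u] by algebra+
  show "s \<le> s * (cos u)\<^sup>2 + (sin u)\<^sup>2" unfolding e1 using assms by simp
  show "s * (cos u)\<^sup>2 + (sin u)\<^sup>2 \<le> 1" unfolding e2 using assms by simp
qed

lemma sq_diff_le: "(x - y)\<^sup>2 \<le> 2 * x\<^sup>2 + 2 * (y::real)\<^sup>2"
  using zero_le_power2[of "x + y"] by (simp add: power2_eq_square algebra_simps)

section \<open>Points of the hemisphere and their phase functions\<close>

definition S2_density :: "real \<Rightarrow> real \<Rightarrow> real" where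
  "S2_density s u = s / (s\<^sup>2 * (cos u)\<^sup>2 + (sin u)\<^sup>2)"

(* a continuous branch of arctan (tan u / s) *)
definition S2_phase :: "real \<Rightarrow> real \<Rightarrow> real" where
  "S2_phase s u = u + arctan ((1 - s) * sin u * cos u / (s * (cos u)\<^sup>2 + (sin u)\<^sup>2))"

lemma S2_density_bounds:
  assumes "0 < s" "s \<le> 1"
  shows "s \<le> S2_density s u" "S2_density s u \<le> 1 / s"
proof -
  define E where "E = s\<^sup>2 * (cos u)\<^sup>2 + (sin u)\<^sup>2"
  have "s\<^sup>2 \<le> E" "E \<le> 1"
    using weighted_cos_sin_sq_bounds[of "s\<^sup>2" u] assms unfolding E_def by (simp_all add: power_le_one)
  moreover have "0 < s\<^sup>2" using assms by simp
  moreover from calculation have "0 < E" by linarith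
  ultimately have "s / 1 \<le> s / E" "s / E \<le> s / s\<^sup>2"
    using assms by (intro divide_left_mono; simp)+
  then show "s \<le> S2_density s u" "S2_density s u \<le> 1 / s"
    using assms by (simp_all add: S2_density_def E_def power2_eq_square)
qed

lemma S2_phase_has_real_derivative:
  fixes s u :: real
  assumes "0 < s" "s \<le> 1"
  shows "(S2_phase s has_real_derivative S2_density s u) (at u)"
proof -
  define c S where "c = cos u" and "S = sin u"
  define D E N where "D = s * c\<^sup>2 + S\<^sup>2" and "E = s\<^sup>2 * c\<^sup>2 + S\<^sup>2" and "N = (1 - s) * S * c"
  have cS: "c\<^sup>2 + S\<^sup>2 = 1" by (simp add: c_def S_def)
  have D: "0 < D" using weighted_cos_sin_sq_bounds(1)[of s u] assms by (simp add: D_def c_def S_def)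
  have E: "0 < E"
    using weighted_cos_sin_sq_bounds(1)[of "s\<^sup>2" u] assms power_le_one[of s 2] zero_less_power[of s 2]
    unfolding E_def c_def S_def by linarith
  define N' D' where "N' = (1 - s) * (c\<^sup>2 - S\<^sup>2)" and "D' = 2 * (1 - s) * S * c"
  have "((\<lambda>u. (1 - s) * sin u * cos u) has_real_derivative N') (at u)"
    and "((\<lambda>u. s * (cos u)\<^sup>2 + (sin u)\<^sup>2) has_real_derivative D') (at u)"
    unfolding N'_def D'_def c_def S_def
    by (auto intro!: derivative_eq_intros simp: algebra_simps power2_eq_square)
  from DERIV_divide[OF this] D
  have "((\<lambda>u. (1 - s) * sin u * cos u / (s * (cos u)\<^sup>2 + (sin u)\<^sup>2)) has_real_derivative
      (N' * D - N * D') / D\<^sup>2) (at u)"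
    by (simp add: c_def S_def D_def N_def power2_eq_square)
  from DERIV_add[OF DERIV_ident DERIV_chain2[OF DERIV_arctan this]]
  have "(S2_phase s has_real_derivative 1 + inverse (1 + (N / D)\<^sup>2) * ((N' * D - N * D') / D\<^sup>2)) (at u)"
    by (simp add: S2_phase_def[abs_def] c_def S_def D_def N_def)
  moreover have "1 + inverse (1 + (N / D)\<^sup>2) * ((N' * D - N * D') / D\<^sup>2) = s / E"
  proof -
    have "D\<^sup>2 + N\<^sup>2 = E" and sum: "E + (N' * D - N * D') = s"
      unfolding D_def E_def N_def N'_def D'_def using cS by algebra+
    then have "1 + (N / D)\<^sup>2 = E / D\<^sup>2" using D by (simp add: field_simps)
    then have "1 + inverse (1 + (N / D)\<^sup>2) * ((N' * D - N * D') / D\<^sup>2) = 1 + (N' * D - N * D') / E"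
      using D by simp
    also have "\<dots> = s / E" using E sum by (simp add: field_simps)
    finally show ?thesis .
  qed
  ultimately show ?thesis by (simp add: S2_density_def E_def c_def S_def)
qed

lemma S2_phase_add_pi: "S2_phase s (u + pi) = S2_phase s u + pi"
  unfolding S2_phase_def by simp

lemma S2_phase_shift_has_real_derivative:
  assumes "0 < s" "s \<le> 1"
  shows "((\<lambda>t. S2_phase s (t - \<tau>) - c) has_real_derivative S2_density s (t - \<tau>)) (at t)"
  by (rule DERIV_chain2[OF S2_phase_has_real_derivative[OF assms], THEN DERIV_diff, THEN DERIV_cong])
    (auto intro!: derivative_eq_intros)

definition S2_fun :: "real \<Rightarrow> real \<Rightarrow> real \<Rightarrow> real" where
  "S2_fun d \<tau> a = arccos (cos d * cos (a - \<tau>))"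

lemma S2_plus_iff: "h \<in> S2_plus \<longleftrightarrow> (\<exists>d \<tau>. d \<in> {0..pi/2} \<and> h = S2_fun d \<tau>)"
  unfolding S2_plus_def S2_fun_def[abs_def] by blast

lemma cos_S2_fun: "cos (S2_fun d \<tau> a) = cos d * cos (a - \<tau>)"
  unfolding S2_fun_def by (simp add: abs_mult mult_le_one cos_arccos_abs)

lemma S2_fun_at_center: "d \<in> {0..pi} \<Longrightarrow> S2_fun d \<tau> \<tau> = d"
  unfolding S2_fun_def by (simp add: arccos_cos)

lemma S2_fun_ge:
  assumes "d \<in> {0..pi/2}"
  shows "d \<le> S2_fun d \<tau> a"
proof -
  have "cos d * cos (a - \<tau>) \<le> cos d"
    using cos_ge_zero[of d] assms by (intro mult_left_le) auto
  moreover have "- 1 \<le> cos d * cos (a - \<tau>)"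
    using abs_le_iff[of "cos d * cos (a - \<tau>)" 1] by (simp add: abs_mult mult_le_one)
  ultimately have "arccos (cos d) \<le> S2_fun d \<tau> a"
    unfolding S2_fun_def by (intro arccos_le_arccos) auto
  then show ?thesis using assms by (simp add: arccos_cos)
qed

lemma hd_S2_fun:
  assumes "d \<in> {0..pi/2}"
  shows "hd (S2_fun d \<tau>) = d"
  unfolding hd_def
proof (rule the_equality)
  show "d \<in> {0..pi/2} \<and> (\<exists>\<tau>'. S2_fun d \<tau> = (\<lambda>a. arccos (cos d * cos (a - \<tau>'))))"
    using assms by (auto simp: S2_fun_def[abs_def])
next
  fix d' assume "d' \<in> {0..pi/2} \<and> (\<exists>\<tau>'. S2_fun d \<tau> = (\<lambda>a. arccos (cos d' * cos (a - \<tau>'))))"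
  then obtain \<tau>' where d': "d' \<in> {0..pi/2}" and eq: "S2_fun d \<tau> = S2_fun d' \<tau>'"
    by (auto simp: S2_fun_def[abs_def])
  \<comment> \<open>both d and d' are the minimum of the same function\<close>
  have "d' \<le> d" using S2_fun_ge[OF d', of \<tau>' \<tau>] eq S2_fun_at_center[of d \<tau>] assms by simp
  moreover have "d \<le> d'" using S2_fun_ge[OF assms, of \<tau> \<tau>'] eq S2_fun_at_center[of d' \<tau>'] d' by simp
  ultimately show "d' = d" by simp
qed

lemma sin_S2_fun_sq: "(sin (S2_fun d \<tau> a))\<^sup>2 = (sin d)\<^sup>2 * (cos (a - \<tau>))\<^sup>2 + (sin (a - \<tau>))\<^sup>2"
proof -
  have "(sin (S2_fun d \<tau> a))\<^sup>2 = 1 - (cos d)\<^sup>2 * (cos (a - \<tau>))\<^sup>2"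
    using sin_squared_eq[of "S2_fun d \<tau> a"] by (simp add: cos_S2_fun power_mult_distrib)
  also have "\<dots> = (sin d)\<^sup>2 * (cos (a - \<tau>))\<^sup>2 + (sin (a - \<tau>))\<^sup>2"
    using sin_cos_squared_add[of d] sin_cos_squared_add[of "a - \<tau>"] by algebra
  finally show ?thesis .
qed

lemma p1_S2_fun: "d \<in> {0..pi/2} \<Longrightarrow> p1 (S2_fun d \<tau>) a = S2_density (sin d) (a - \<tau>)"
  unfolding p1_def S2_density_def by (simp add: hd_S2_fun sin_S2_fun_sq)

lemma nu_S2_fun:
  assumes "d \<in> {0<..pi/2}"
  shows "nu (S2_fun d \<tau>) = (\<lambda>t. S2_phase (sin d) (t - \<tau>) - S2_phase (sin d) (- \<tau>))"
proof -
  define s where "s = sin d"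
  have s: "0 < s" "s \<le> 1" using assms unfolding s_def by (auto intro!: sin_gt_zero)
  define \<nu> where "\<nu> = (\<lambda>t. S2_phase s (t - \<tau>) - S2_phase s (- \<tau>))"
  have p1: "p1 (S2_fun d \<tau>) t = S2_density s (t - \<tau>)" for t
    using p1_S2_fun assms unfolding s_def by auto
  have deriv: "(\<nu> has_real_derivative S2_density s (t - \<tau>)) (at t)" for t
    unfolding \<nu>_def by (rule S2_phase_shift_has_real_derivative[OF s])
  have "lipschitz_on (1 / s) UNIV \<nu>"
  proof (rule bounded_derivative_imp_lipschitz[where f' = "\<lambda>t x. S2_density s (t - \<tau>) * x"])
    show "(\<nu> has_derivative (\<lambda>x. S2_density s (t - \<tau>) * x)) (at t within UNIV)" for t
      using deriv[of t] by (simp add: has_field_derivative_def)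
    show "onorm (\<lambda>x. S2_density s (t - \<tau>) * x) \<le> 1 / s" for t
    proof (rule onorm_le)
      have "0 \<le> S2_density s (t - \<tau>)" "S2_density s (t - \<tau>) \<le> 1 / s"
        using S2_density_bounds[OF s, of "t - \<tau>"] s by linarith+
      then show "norm (S2_density s (t - \<tau>) * x) \<le> 1 / s * norm x" for x
        unfolding norm_mult by (intro mult_right_mono) auto
    qed
  qed (use s in auto)
  moreover have "\<mu> = \<nu>" if "\<mu> 0 = 0" "\<And>t. (\<mu> has_real_derivative p1 (S2_fun d \<tau>) t) (at t)" for \<mu>
  proof -
    have "((\<lambda>t. \<mu> t - \<nu> t) has_real_derivative 0) (at x)" for x
      using DERIV_diff[OF that(2)[of x] deriv[of x]] by (simp add: p1)
    then have "\<mu> t - \<nu> t = \<mu> 0 - \<nu> 0" for t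
      using DERIV_isconst_all[of "\<lambda>t. \<mu> t - \<nu> t"] by blast
    then show ?thesis using that(1) by (auto simp: \<nu>_def fun_eq_iff)
  qed
  ultimately have "nu (S2_fun d \<tau>) = \<nu>"
    unfolding nu_def using deriv by (intro the_equality) (auto simp: \<nu>_def p1)
  then show ?thesis by (simp add: \<nu>_def s_def)
qed

lemma
  assumes "d \<in> {0<..pi/2}"
  shows nu_S2_fun_has_real_derivative:
      "(nu (S2_fun d \<tau>) has_real_derivative S2_density (sin d) (t - \<tau>)) (at t)"
    and nu_S2_fun_add_pi: "nu (S2_fun d \<tau>) (t + pi) = nu (S2_fun d \<tau>) t + pi"
proof -
  have "0 < sin d" "sin d \<le> 1" using assms by (auto intro!: sin_gt_zero)
  then show "(nu (S2_fun d \<tau>) has_real_derivative S2_density (sin d) (t - \<tau>)) (at t)"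
    unfolding nu_S2_fun[OF assms] by (rule S2_phase_shift_has_real_derivative)
  show "nu (S2_fun d \<tau>) (t + pi) = nu (S2_fun d \<tau>) t + pi"
    unfolding nu_S2_fun[OF assms] using S2_phase_add_pi[of "sin d" "t - \<tau>"] by (simp add: algebra_simps)
qed

lemma nu_S2_fun_measurable:
  assumes "d \<in> {0<..pi/2}"
  shows "nu (S2_fun d \<tau>) \<in> borel_measurable borel"
  using nu_S2_fun_has_real_derivative[OF assms]
  by (intro borel_measurable_continuous_onI continuous_at_imp_continuous_on ballI DERIV_isCont) blast

lemma nu_S2_fun_increment_bounds:
  assumes "d \<in> {0<..pi/2}" "a \<le> b" "b \<le> a + pi"
  shows "sin d * (b - a) \<le> nu (S2_fun d \<tau>) b - nu (S2_fun d \<tau>) a"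
    and "nu (S2_fun d \<tau>) b - nu (S2_fun d \<tau>) a \<le> pi - sin d * (pi - (b - a))"
proof -
  have s: "0 < sin d" "sin d \<le> 1" using assms by (auto intro!: sin_gt_zero)
  have lower: "sin d * (y - x) \<le> nu (S2_fun d \<tau>) y - nu (S2_fun d \<tau>) x" if "x \<le> y" for x y
    using DERIV_bounds_imp_increment_bounds[OF nu_S2_fun_has_real_derivative[OF assms(1)]
        S2_density_bounds[OF s] that] by blast
  show "sin d * (b - a) \<le> nu (S2_fun d \<tau>) b - nu (S2_fun d \<tau>) a"
    using lower[OF assms(2)] .
  \<comment> \<open>the upper bound is the lower bound on the complementary interval from b to a + pi\<close>
  show "nu (S2_fun d \<tau>) b - nu (S2_fun d \<tau>) a \<le> pi - sin d * (pi - (b - a))"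
    using lower[OF assms(3)] nu_S2_fun_add_pi[OF assms(1), of \<tau> a] by (simp add: algebra_simps)
qed

lemma S2_plus_E_r_obtain:
  assumes "h \<in> S2_plus \<inter> E_r r"
  obtains d \<tau> where "d \<in> {r..pi/2}" "h = S2_fun d \<tau>"
proof -
  obtain d \<tau> where d: "d \<in> {0..pi/2}" and h: "h = S2_fun d \<tau>"
    using assms S2_plus_iff by blast
  have "h \<tau> \<in> {r..pi - r}" using assms unfolding E_r_def by blast
  then have "d \<in> {r..pi/2}" using d h S2_fun_at_center[of d \<tau>] by auto
  with h show ?thesis using that by blast
qed

lemma
  assumes "0 < r" "h \<in> S2_plus \<inter> E_r r" "a \<le> b" "b \<le> a + pi"
  shows nu_increment_ge: "sin r * (b - a) \<le> nu h b - nu h a"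
    and nu_increment_le: "nu h b - nu h a \<le> pi - sin r * (pi - (b - a))"
proof -
  obtain d \<tau> where d: "d \<in> {r..pi/2}" and h: "h = S2_fun d \<tau>"
    using S2_plus_E_r_obtain[OF assms(2)] .
  have d': "d \<in> {0<..pi/2}" using d \<open>0 < r\<close> by auto
  have "sin r \<le> sin d" using d \<open>0 < r\<close> by (intro sin_ge_sin_margin) auto
  moreover have "0 \<le> b - a" "0 \<le> pi - (b - a)" using assms by auto
  ultimately have "sin r * (b - a) \<le> sin d * (b - a)" "sin r * (pi - (b - a)) \<le> sin d * (pi - (b - a))"
    by (simp_all add: mult_right_mono)
  moreover note nu_S2_fun_increment_bounds[OF d' assms(3,4), of \<tau>]
  ultimately show "sin r * (b - a) \<le> nu h b - nu h a" "nu h b - nu h a \<le> pi - sin r * (pi - (b - a))"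
    unfolding h by linarith+
qed

lemma nu_measurable:
  assumes "0 < r" "h \<in> S2_plus \<inter> E_r r"
  shows "nu h \<in> borel_measurable borel"
proof -
  obtain d \<tau> where "d \<in> {r..pi/2}" "h = S2_fun d \<tau>"
    using S2_plus_E_r_obtain[OF assms(2)] .
  then show ?thesis using nu_S2_fun_measurable[of d \<tau>] \<open>0 < r\<close> by simp
qed

section \<open>The density p2 and the kernel\<close>

(* the Gram determinant of three unit vectors with pairwise cosines c, x, y *)
definition gram :: "real \<Rightarrow> real \<Rightarrow> real \<Rightarrow> real" where
  "gram c x y = 1 - c\<^sup>2 - x\<^sup>2 - y\<^sup>2 + 2 * c * x * y"

lemma p2_eq_gram:
  "p2 f a b = gram (cos (b - a)) (cos (f a)) (cos (f b)) / ((sin (b - a))\<^sup>2 * (sin (f a))\<^sup>2 * (sin (f b))\<^sup>2)"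
  unfolding p2_def gram_def by simp

lemma gram_cos_cos: "gram c (cos x) (cos y) = (cos (x - y) - c) * (c - cos (x + y))"
  unfolding gram_def cos_diff cos_add
  using sin_cos_squared_add[of x] sin_cos_squared_add[of y] by algebra

lemma gram_S2_fun: "gram (cos (b - a)) (cos (S2_fun d \<tau> a)) (cos (S2_fun d \<tau> b)) = (sin d)\<^sup>2 * (sin (b - a))\<^sup>2"
proof -
  have "b - a = (b - \<tau>) - (a - \<tau>)" by simp
  then show ?thesis
    unfolding gram_def cos_S2_fun
    using sin_cos_squared_add[of d] sin_cos_squared_add[of "a - \<tau>"] sin_cos_squared_add[of "b - \<tau>"]
    by (simp only: cos_diff sin_diff) algebra
qed

lemma gram_lipschitz:
  fixes c x y x' y' :: real
  assumes "\<bar>c\<bar> \<le> 1" "\<bar>x\<bar> \<le> 1" "\<bar>y\<bar> \<le> 1" "\<bar>x'\<bar> \<le> 1" "\<bar>y'\<bar> \<le> 1"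
  shows "\<bar>gram c x y - gram c x' y'\<bar> \<le> 4 * (\<bar>x - x'\<bar> + \<bar>y - y'\<bar>)"
proof -
  define A B where "A = 2 * c * y' - (x + x')" and "B = 2 * c * x - (y + y')"
  have "gram c x y - gram c x' y' = A * (x - x') + B * (y - y')"
    unfolding gram_def A_def B_def by (simp add: algebra_simps power2_eq_square)
  moreover have "\<bar>c * y'\<bar> \<le> 1" "\<bar>c * x\<bar> \<le> 1"
    using assms by (simp_all add: abs_mult mult_le_one)
  then have "\<bar>A\<bar> \<le> 4" "\<bar>B\<bar> \<le> 4"
    using assms unfolding A_def B_def abs_le_iff mult.assoc by linarith+
  then have "\<bar>A\<bar> * \<bar>x - x'\<bar> + \<bar>B\<bar> * \<bar>y - y'\<bar> \<le> 4 * \<bar>x - x'\<bar> + 4 * \<bar>y - y'\<bar>"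
    by (intro add_mono mult_right_mono) auto
  moreover have "\<bar>A * (x - x') + B * (y - y')\<bar> \<le> \<bar>A\<bar> * \<bar>x - x'\<bar> + \<bar>B\<bar> * \<bar>y - y'\<bar>"
    unfolding abs_mult[symmetric] by (rule abs_triangle_ineq)
  ultimately show ?thesis by simp
qed

lemma E_S1_lipschitz: "f \<in> E_S1 \<Longrightarrow> \<bar>f x - f y\<bar> \<le> \<bar>x - y\<bar>"
  using lipschitz_onD[of 1 UNIV f x y] unfolding E_S1_def by (simp add: dist_real_def)

lemma E_S1_add_pi: "f \<in> E_S1 \<Longrightarrow> f (x + pi) = pi - f x"
  unfolding E_S1_def by (simp add: eq_diff_eq)

lemma gram_E_S1_bounds:
  assumes f: "f \<in> E_S1" and "a \<le> b" "b \<le> a + pi"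
  shows "0 \<le> gram (cos (b - a)) (cos (f a)) (cos (f b))"
    and "gram (cos (b - a)) (cos (f a)) (cos (f b)) \<le> (sin (b - a))\<^sup>2"
proof -
  define x y t where "x = f a" and "y = f b" and "t = b - a"
  have "\<bar>x - y\<bar> \<le> t" using E_S1_lipschitz[OF f, of a b] assms by (simp add: x_def y_def t_def)
  then have le: "cos t \<le> cos (x - y)" using assms by (intro cos_le_cos_of_abs_le) (auto simp: t_def)
  \<comment> \<open>f (a + pi) = pi - x, so the Lipschitz bound between b and a + pi controls x + y\<close>
  have "\<bar>x + y - pi\<bar> \<le> pi - t"
    using E_S1_lipschitz[OF f, of "a + pi" b] E_S1_add_pi[OF f, of a] assms
    by (simp add: x_def y_def t_def abs_minus_commute)
  then have "cos (pi - t) \<le> cos (x + y - pi)" using assms by (intro cos_le_cos_of_abs_le) (auto simp: t_def)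
  then have ge: "cos (x + y) \<le> cos t" by (simp add: cos_diff)
  have gram: "gram (cos t) (cos x) (cos y) = (cos (x - y) - cos t) * (cos t - cos (x + y))"
    by (rule gram_cos_cos)
  then show "0 \<le> gram (cos (b - a)) (cos (f a)) (cos (f b))"
    using le ge by (simp add: x_def y_def t_def)
  have "gram (cos t) (cos x) (cos y) \<le> (1 - cos t) * (cos t + 1)"
    unfolding gram using le ge by (intro mult_mono) auto
  also have "\<dots> = (sin t)\<^sup>2"
    by (simp add: sin_squared_eq algebra_simps power2_eq_square)
  finally show "gram (cos (b - a)) (cos (f a)) (cos (f b)) \<le> (sin (b - a))\<^sup>2"
    by (simp add: x_def y_def t_def)
qed

lemma p2_bounds:
  assumes f: "f \<in> E_S1" and "a \<le> b" "b \<le> a + pi" and "0 < m" and fm: "\<And>x. f x \<in> {m..pi - m}"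
  shows "0 \<le> p2 f a b" "p2 f a b \<le> 1 / (sin m)^4"
proof -
  have sin_m: "0 < sin m" "sin m \<le> sin (f a)" "sin m \<le> sin (f b)"
    using fm[of a] fm[of b] \<open>0 < m\<close> by (auto intro!: sin_gt_zero sin_ge_sin_margin)
  define D where "D = (sin (b - a))\<^sup>2 * (sin (f a))\<^sup>2 * (sin (f b))\<^sup>2"
  have p2: "p2 f a b = gram (cos (b - a)) (cos (f a)) (cos (f b)) / D"
    unfolding p2_eq_gram D_def ..
  show "0 \<le> p2 f a b"
    unfolding p2 D_def using gram_E_S1_bounds(1)[OF assms(1-3)] by simp
  \<comment> \<open>if sin (b - a) = 0 then p2 f a b = 0 by division by zero\<close>
  show "p2 f a b \<le> 1 / (sin m)^4"
  proof (cases "sin (b - a) = 0")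
    case False
    then have "p2 f a b \<le> (sin (b - a))\<^sup>2 / D"
      unfolding p2 D_def using gram_E_S1_bounds(2)[OF assms(1-3)] sin_m by (intro divide_right_mono) auto
    also have "\<dots> = 1 / ((sin (f a))\<^sup>2 * (sin (f b))\<^sup>2)" using False by (simp add: D_def)
    also have "\<dots> \<le> 1 / ((sin m)\<^sup>2 * (sin m)\<^sup>2)"
      using sin_m by (intro divide_left_mono mult_mono power_mono) auto
    finally show ?thesis by (simp add: power2_eq_square power4_eq_xxxx)
  qed (simp add: p2_def sin_m)
qed

lemma gram_le_p2:
  assumes "0 \<le> gram (cos (b - a)) (cos (f a)) (cos (f b))"
    and "sin (b - a) \<noteq> 0" "sin (f a) \<noteq> 0" "sin (f b) \<noteq> 0"
  shows "gram (cos (b - a)) (cos (f a)) (cos (f b)) \<le> p2 f a b"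
proof -
  have "0 < (sin (b - a))\<^sup>2 * (sin (f a))\<^sup>2 * (sin (f b))\<^sup>2"
    and "(sin (b - a))\<^sup>2 * (sin (f a))\<^sup>2 * (sin (f b))\<^sup>2 \<le> 1"
    using assms by (auto intro!: mult_le_one simp: abs_square_le_1)
  then show ?thesis unfolding p2_eq_gram using assms(1)
    by (simp add: le_divide_eq mult_left_le)
qed

lemma p2_ge_near_S2_fun:
  assumes f: "f \<in> E_S1" and "a \<le> b" "b \<le> a + pi"
    and close: "\<bar>f a - S2_fun d \<tau> a\<bar> \<le> \<epsilon>" "\<bar>f b - S2_fun d \<tau> b\<bar> \<le> \<epsilon>"
    and "sin (b - a) \<noteq> 0" "sin (f a) \<noteq> 0" "sin (f b) \<noteq> 0"
  shows "(sin d)\<^sup>2 * (sin (b - a))\<^sup>2 - 8 * \<epsilon> \<le> p2 f a b"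
proof -
  have "\<bar>gram (cos (b - a)) (cos (f a)) (cos (f b))
      - gram (cos (b - a)) (cos (S2_fun d \<tau> a)) (cos (S2_fun d \<tau> b))\<bar>
      \<le> 4 * (\<bar>cos (f a) - cos (S2_fun d \<tau> a)\<bar> + \<bar>cos (f b) - cos (S2_fun d \<tau> b)\<bar>)"
    by (rule gram_lipschitz) auto
  also have "\<dots> \<le> 4 * (\<epsilon> + \<epsilon>)"
    using cos_lipschitz[of "f a" "S2_fun d \<tau> a"] cos_lipschitz[of "f b" "S2_fun d \<tau> b"] close by simp
  finally have "(sin d)\<^sup>2 * (sin (b - a))\<^sup>2 - 8 * \<epsilon> \<le> gram (cos (b - a)) (cos (f a)) (cos (f b))"
    unfolding gram_S2_fun by (simp add: abs_le_iff)
  also have "\<dots> \<le> p2 f a b"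
    using assms by (intro gram_le_p2 gram_E_S1_bounds(1)[OF f]) auto
  finally show ?thesis .
qed

lemma E_r_le: "h \<in> E_r r \<Longrightarrow> r \<le> pi / 2"
  unfolding E_r_def by force

lemma E_r_perturbation:
  assumes "h \<in> E_r r" "\<bar>f x - h x\<bar> \<le> \<epsilon>" "\<epsilon> \<le> r / 2"
  shows "f x \<in> {r/2..pi - r/2}"
proof -
  have "h x \<in> {r..pi - r}" using assms(1) unfolding E_r_def by blast
  then show ?thesis using assms(2,3) by (auto simp: abs_le_iff)
qed

lemma p2_bounds_near_E_r:
  assumes "0 < r" "h \<in> E_r r" "f \<in> E_S1" "\<And>x. \<bar>f x - h x\<bar> \<le> \<epsilon>" "\<epsilon> \<le> r / 2" "a \<le> b" "b \<le> a + pi"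
  shows "0 \<le> p2 f a b" "p2 f a b \<le> 1 / sin (r / 2) ^ 4"
proof -
  have "f x \<in> {r/2..pi - r/2}" for x using E_r_perturbation assms(2,4,5) by blast
  then show "0 \<le> p2 f a b" "p2 f a b \<le> 1 / sin (r / 2) ^ 4"
    using p2_bounds[OF assms(3,6,7), of "r / 2"] assms(1) by auto
qed

lemma p2_ge_near_S2_plus:
  assumes r: "0 < r" and h: "h \<in> S2_plus \<inter> E_r r" and f: "f \<in> E_S1"
    and close: "\<And>x. \<bar>f x - h x\<bar> \<le> \<epsilon>" and "\<epsilon> \<le> r / 2"
    and \<delta>: "0 < \<delta>" "\<delta> \<le> b - a" "b - a \<le> pi - \<delta>"
  shows "(sin r * sin \<delta>)\<^sup>2 - 8 * \<epsilon> \<le> p2 f a b"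
proof -
  obtain d \<tau> where d: "d \<in> {r..pi/2}" and h_eq: "h = S2_fun d \<tau>"
    using S2_plus_E_r_obtain[OF h] .
  have "r \<le> pi / 2" using E_r_le h by blast
  have sin_f: "0 < sin (f x)" for x
  proof -
    have "0 < sin (r / 2)" using r \<open>r \<le> pi / 2\<close> by (intro sin_gt_zero) auto
    also have "\<dots> \<le> sin (f x)"
      using E_r_perturbation[of h r f x \<epsilon>] h close \<open>\<epsilon> \<le> r / 2\<close> r by (intro sin_ge_sin_margin) auto
    finally show ?thesis .
  qed
  have sin_\<delta>: "0 < sin \<delta>" "sin \<delta> \<le> sin (b - a)"
    using \<delta> by (auto intro!: sin_gt_zero sin_ge_sin_margin)
  have "(sin d)\<^sup>2 * (sin (b - a))\<^sup>2 - 8 * \<epsilon> \<le> p2 f a b"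
    using close[of a] close[of b] \<delta> sin_\<delta> sin_f[of a] sin_f[of b] unfolding h_eq
    by (intro p2_ge_near_S2_fun[OF f]) auto
  moreover have "0 < sin r" "sin r \<le> sin d"
    using d r by (auto intro!: sin_gt_zero sin_ge_sin_margin)
  then have "(sin r * sin \<delta>)\<^sup>2 \<le> (sin d)\<^sup>2 * (sin (b - a))\<^sup>2"
    using sin_\<delta> unfolding power_mult_distrib by (intro mult_mono power_mono) auto
  ultimately show ?thesis by linarith
qed

definition kernel :: "(real \<Rightarrow> real) \<Rightarrow> (real \<Rightarrow> real) \<Rightarrow> (real \<Rightarrow> real) \<Rightarrow> real \<Rightarrow> real \<Rightarrow> real" where
  "kernel f h \<eta> a b = p2 f a b * sin ((nu h b - nu h a) + (\<eta> b - \<eta> a))"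

definition kernel_const :: "real \<Rightarrow> real \<Rightarrow> real" where
  "kernel_const r \<delta> = (sin r * sin \<delta>)\<^sup>2 / 2 * sin (sin r * \<delta> / 2)"

lemma kernel_const_pos:
  assumes "0 < r" "r \<le> pi / 2" "0 < \<delta>" "\<delta> \<le> pi / 2"
  shows "0 < kernel_const r \<delta>"
proof -
  have "0 < sin r" "0 < sin \<delta>" using assms by (auto intro!: sin_gt_zero)
  moreover have "0 < sin r * \<delta>" "sin r * \<delta> \<le> \<delta>"
    using \<open>0 < sin r\<close> assms by (auto intro: mult_left_le_one_le)
  then have "0 < sin (sin r * \<delta> / 2)" using assms by (intro sin_gt_zero) linarith+
  ultimately show ?thesis by (simp add: kernel_const_def)
qed

lemma kernel_abs_le:
  assumes "0 < r" "h \<in> S2_plus \<inter> E_r r" "f \<in> E_S1" "\<And>x. \<bar>f x - h x\<bar> \<le> \<epsilon>" "\<epsilon> \<le> r / 2"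
    and "a \<le> b" "b \<le> a + pi"
  shows "\<bar>kernel f h \<eta> a b\<bar> \<le> 1 / sin (r / 2) ^ 4"
proof -
  have "\<bar>p2 f a b\<bar> * \<bar>sin ((nu h b - nu h a) + (\<eta> b - \<eta> a))\<bar> \<le> 1 / sin (r / 2) ^ 4 * 1"
    using p2_bounds_near_E_r[OF assms(1) _ assms(3-7)] assms(2) by (intro mult_mono) auto
  then show ?thesis by (simp add: kernel_def abs_mult)
qed

lemma kernel_ge:
  assumes r: "0 < r" and h: "h \<in> S2_plus \<inter> E_r r" and f: "f \<in> E_S1"
    and close: "\<And>x. \<bar>f x - h x\<bar> \<le> \<epsilon>" and "\<epsilon> \<le> r / 2"
    and \<eta>: "\<bar>\<eta> a\<bar> \<le> \<epsilon>" "\<bar>\<eta> b\<bar> \<le> \<epsilon>" and ab: "a \<le> b" "b \<le> a + pi"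
  shows "- (2 * \<epsilon> / sin (r / 2) ^ 4) \<le> kernel f h \<eta> a b"
proof -
  have p2: "0 \<le> p2 f a b" "p2 f a b \<le> 1 / sin (r / 2) ^ 4"
    using p2_bounds_near_E_r[OF r _ f close \<open>\<epsilon> \<le> r / 2\<close> ab] h by auto
  have "r \<le> pi / 2" using E_r_le h by blast
  then have "0 \<le> sin r" using r by (intro sin_ge_zero) auto
  then have "0 \<le> sin r * (b - a)" "0 \<le> sin r * (pi - (b - a))" using ab by simp_all
  then have "0 \<le> nu h b - nu h a" "nu h b - nu h a \<le> pi"
    using nu_increment_ge[OF r h ab] nu_increment_le[OF r h ab] by linarith+
  moreover have "\<bar>\<eta> b - \<eta> a\<bar> \<le> 2 * \<epsilon>" using \<eta> by simp
  ultimately have "- (2 * \<epsilon>) \<le> sin ((nu h b - nu h a) + (\<eta> b - \<eta> a))"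
    using sin_add_ge_neg_abs[of "nu h b - nu h a" "\<eta> b - \<eta> a"] \<open>\<epsilon> \<le> r / 2\<close> \<open>r \<le> pi / 2\<close> by linarith
  then have "p2 f a b * (- (2 * \<epsilon>)) \<le> kernel f h \<eta> a b"
    unfolding kernel_def using p2 by (intro mult_left_mono) auto
  moreover have "1 / sin (r / 2) ^ 4 * (- (2 * \<epsilon>)) \<le> p2 f a b * (- (2 * \<epsilon>))"
    using p2 \<eta> by (intro mult_right_mono_neg) auto
  ultimately show ?thesis by simp
qed

lemma kernel_ge_off_diagonal:
  assumes r: "0 < r" and h: "h \<in> S2_plus \<inter> E_r r" and f: "f \<in> E_S1"
    and close: "\<And>x. \<bar>f x - h x\<bar> \<le> \<epsilon>" and "\<epsilon> \<le> r / 2"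
    and \<eta>: "\<bar>\<eta> a\<bar> \<le> \<epsilon>" "\<bar>\<eta> b\<bar> \<le> \<epsilon>"
    and \<delta>: "0 < \<delta>" "\<delta> \<le> b - a" "b - a \<le> pi - \<delta>"
    and \<epsilon>: "4 * \<epsilon> \<le> sin r * \<delta>" "16 * \<epsilon> \<le> (sin r * sin \<delta>)\<^sup>2"
  shows "kernel_const r \<delta> \<le> kernel f h \<eta> a b"
proof -
  have ab: "a \<le> b" "b \<le> a + pi" using \<delta> by auto
  have "0 < sin r" using r E_r_le[of h r] h by (intro sin_gt_zero) auto
  then have "sin r * \<delta> \<le> sin r * (b - a)" "sin r * \<delta> \<le> sin r * (pi - (b - a))"
    using \<delta> by simp_all
  with nu_increment_ge[OF r h ab] nu_increment_le[OF r h ab] \<eta> \<epsilon>(1)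
  have "sin r * \<delta> / 2 \<le> (nu h b - nu h a) + (\<eta> b - \<eta> a)"
    "(nu h b - nu h a) + (\<eta> b - \<eta> a) \<le> pi - sin r * \<delta> / 2"
    by (auto simp: abs_le_iff)
  then have phase: "0 \<le> sin (sin r * \<delta> / 2)" "sin (sin r * \<delta> / 2) \<le> sin ((nu h b - nu h a) + (\<eta> b - \<eta> a))"
    using \<open>0 < sin r\<close> \<delta> by (auto intro!: sin_ge_zero sin_ge_sin_margin)
  have "(sin r * sin \<delta>)\<^sup>2 / 2 \<le> p2 f a b" "0 \<le> p2 f a b"
    using p2_ge_near_S2_plus[OF r h f close \<open>\<epsilon> \<le> r / 2\<close> \<delta>] \<epsilon>(2) zero_le_power2[of "sin r * sin \<delta>"]
    by linarith+
  then show ?thesis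
    unfolding kernel_const_def kernel_def using phase by (intro mult_mono) auto
qed

section \<open>Quadratic forms on mean-zero periodic functions\<close>

lemma (in pair_sigma_finite) integrable_mult_fst_snd:
  fixes F :: "'a \<Rightarrow> real" and G :: "'b \<Rightarrow> real"
  assumes F: "integrable M1 F" and G: "integrable M2 G"
  shows "integrable (M1 \<Otimes>\<^sub>M M2) (\<lambda>z. F (fst z) * G (snd z))"
proof (rule Fubini_integrable)
  have [measurable]: "F \<in> borel_measurable M1" "G \<in> borel_measurable M2" using F G by auto
  show "(\<lambda>z. F (fst z) * G (snd z)) \<in> borel_measurable (M1 \<Otimes>\<^sub>M M2)" by measurable
  have "integrable M1 (\<lambda>x. norm (F x) * (\<integral>y. norm (G y) \<partial>M2))"
    using F by (intro integrable_mult_left integrable_norm)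
  then show "integrable M1 (\<lambda>x. \<integral>y. norm (F (fst (x, y)) * G (snd (x, y))) \<partial>M2)"
    by (simp add: abs_mult)
  show "AE x in M1. integrable M2 (\<lambda>y. F (fst (x, y)) * G (snd (x, y)))"
    using G by auto
qed

lemma (in pair_sigma_finite) integral_mult_fst_snd:
  fixes F :: "'a \<Rightarrow> real" and G :: "'b \<Rightarrow> real"
  assumes "integrable M1 F" and "integrable M2 G"
  shows "integral\<^sup>L (M1 \<Otimes>\<^sub>M M2) (\<lambda>z. F (fst z) * G (snd z)) = integral\<^sup>L M1 F * integral\<^sup>L M2 G"
  using integral_fst'[OF integrable_mult_fst_snd[OF assms]] by simp

lemma
  fixes F :: "real \<Rightarrow> real"
  assumes F: "integrable lborel F" and "0 \<le> \<delta>"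
  shows integrable_strip: "integrable (lborel \<Otimes>\<^sub>M lborel) (\<lambda>z. F (fst z) * indicator {fst z - \<delta>..fst z + \<delta>} (snd z))"
    and integral_strip: "integral\<^sup>L (lborel \<Otimes>\<^sub>M lborel) (\<lambda>z. F (fst z) * indicator {fst z - \<delta>..fst z + \<delta>} (snd z))
      = 2 * \<delta> * integral\<^sup>L lborel F"
proof -
  have [measurable]: "F \<in> borel_measurable lborel" using F by auto
  have inner: "(\<integral>y. G x * indicator {x - \<delta>..x + \<delta>} y \<partial>lborel) = 2 * \<delta> * G x" for G :: "real \<Rightarrow> real" and x
    using \<open>0 \<le> \<delta>\<close> by simp
  show int: "integrable (lborel \<Otimes>\<^sub>M lborel) (\<lambda>z. F (fst z) * indicator {fst z - \<delta>..fst z + \<delta>} (snd z))"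
  proof (rule lborel_pair.Fubini_integrable)
    show "(\<lambda>z. F (fst z) * indicator {fst z - \<delta>..fst z + \<delta>} (snd z)) \<in> borel_measurable (lborel \<Otimes>\<^sub>M lborel)"
      unfolding indicator_def atLeastAtMost_iff by measurable
    have "(\<integral>y. norm (F (fst (x, y)) * indicator {fst (x, y) - \<delta>..fst (x, y) + \<delta>} (snd (x, y))) \<partial>lborel)
        = 2 * \<delta> * norm (F x)" for x
      using inner[of "\<lambda>x. norm (F x)" x] by (simp add: abs_mult)
    then show "integrable lborel (\<lambda>x. \<integral>y. norm (F (fst (x, y)) * indicator {fst (x, y) - \<delta>..fst (x, y) + \<delta>} (snd (x, y))) \<partial>lborel)"
      using F by simp
    show "AE x in lborel. integrable lborel (\<lambda>y. F (fst (x, y)) * indicator {fst (x, y) - \<delta>..fst (x, y) + \<delta>} (snd (x, y)))"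
      by (auto intro!: integrable_real_indicator simp: emeasure_lborel_Icc_eq)
  qed
  show "integral\<^sup>L (lborel \<Otimes>\<^sub>M lborel) (\<lambda>z. F (fst z) * indicator {fst z - \<delta>..fst z + \<delta>} (snd z))
      = 2 * \<delta> * integral\<^sup>L lborel F"
  proof -
    have "integral\<^sup>L (lborel \<Otimes>\<^sub>M lborel) (\<lambda>z. F (fst z) * indicator {fst z - \<delta>..fst z + \<delta>} (snd z))
        = (\<integral>x. (\<integral>y. F x * indicator {x - \<delta>..x + \<delta>} y \<partial>lborel) \<partial>lborel)"
      using lborel_pair.integral_fst'[OF int] by simp
    also have "\<dots> = (\<integral>x. 2 * \<delta> * F x \<partial>lborel)"
      by (simp only: inner)
    finally show ?thesis by simp
  qed
qed

lemma
  fixes F :: "real \<Rightarrow> real"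
  assumes F: "integrable lborel F" and "0 \<le> \<delta>"
  shows integrable_strip': "integrable (lborel \<Otimes>\<^sub>M lborel) (\<lambda>z. F (snd z) * indicator {snd z - \<delta>..snd z + \<delta>} (fst z))"
    and integral_strip': "integral\<^sup>L (lborel \<Otimes>\<^sub>M lborel) (\<lambda>z. F (snd z) * indicator {snd z - \<delta>..snd z + \<delta>} (fst z))
      = 2 * \<delta> * integral\<^sup>L lborel F"
proof -
  have [measurable]: "F \<in> borel_measurable lborel" using F by auto
  have "(\<lambda>z. F (fst z) * indicator {fst z - \<delta>..fst z + \<delta>} (snd z)) \<in> borel_measurable (lborel \<Otimes>\<^sub>M lborel)"
    unfolding indicator_def atLeastAtMost_iff by measurable
  from lborel_pair.integral_product_swap[OF this] lborel_pair.integrable_product_swap[OF integrable_strip[OF assms]]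
  show "integrable (lborel \<Otimes>\<^sub>M lborel) (\<lambda>z. F (snd z) * indicator {snd z - \<delta>..snd z + \<delta>} (fst z))"
    and "integral\<^sup>L (lborel \<Otimes>\<^sub>M lborel) (\<lambda>z. F (snd z) * indicator {snd z - \<delta>..snd z + \<delta>} (fst z))
      = 2 * \<delta> * integral\<^sup>L lborel F"
    using integral_strip[OF assms] by (simp_all add: case_prod_beta')
qed

lemma L2_0_measurable: "v \<in> L2_0 \<Longrightarrow> v \<in> borel_measurable lborel"
  unfolding L2_0_def by blast

lemma L2_0_integrable_sq: "v \<in> L2_0 \<Longrightarrow> integrable lborel (\<lambda>t. indicator {0..pi} t * (v t)\<^sup>2)"
  unfolding L2_0_def set_integrable_def by simp

lemma L2_0_integral_eq_0: "v \<in> L2_0 \<Longrightarrow> integral\<^sup>L lborel (\<lambda>t. indicator {0..pi} t * v t) = 0"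
  unfolding L2_0_def set_lebesgue_integral_def by simp

lemma L2_0_integrable:
  assumes "v \<in> L2_0"
  shows "integrable lborel (\<lambda>t. indicator {0..pi} t * v t)"
proof -
  have [measurable]: "v \<in> borel_measurable lborel" using assms by (rule L2_0_measurable)
  have "\<bar>v t\<bar> \<le> 1 + (v t)\<^sup>2" for t
    using zero_le_power2[of "\<bar>v t\<bar> - 1"] by (simp add: power2_eq_square algebra_simps)
  then have bound: "AE t in lborel. norm (indicator {0..pi} t * v t)
      \<le> norm (indicator {0..pi} t + indicator {0..pi} t * (v t)\<^sup>2 :: real)"
    by (intro AE_I2) (simp add: indicator_def)
  have "integrable lborel (\<lambda>t. indicator {0..pi} t + indicator {0..pi} t * (v t)\<^sup>2 :: real)"
    using L2_0_integrable_sq[OF assms]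
    by (intro Bochner_Integration.integrable_add integrable_real_indicator) auto
  then show ?thesis
    by (rule Bochner_Integration.integrable_bound[OF _ _ bound]) measurable
qed

lemma L2norm_sq: "(L2norm v)\<^sup>2 = pi * integral\<^sup>L lborel (\<lambda>t. indicator {0..pi} t * (v t)\<^sup>2)"
proof -
  have "0 \<le> integral\<^sup>L lborel (\<lambda>t. indicator {0..pi} t * (v t)\<^sup>2)"
    by (intro Bochner_Integration.integral_nonneg) (auto simp: indicator_def)
  then show ?thesis unfolding L2norm_def set_lebesgue_integral_def by simp
qed

definition triangle :: "(real \<times> real) set" where
  "triangle = {z. 0 \<le> fst z \<and> fst z \<le> snd z \<and> snd z \<le> pi}"

lemma triangle_sets [measurable]: "triangle \<in> sets (lborel \<Otimes>\<^sub>M lborel)"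
proof -
  have "triangle = {z \<in> space (lborel \<Otimes>\<^sub>M lborel). 0 \<le> fst z \<and> fst z \<le> snd z \<and> snd z \<le> pi}"
    by (simp add: triangle_def space_pair_measure)
  also have "\<dots> \<in> sets (lborel \<Otimes>\<^sub>M lborel)" by measurable
  finally show ?thesis .
qed

lemma
  assumes "v \<in> L2_0"
  shows integrable_square_sq_diff: "integrable (lborel \<Otimes>\<^sub>M lborel)
      (\<lambda>z. indicator ({0..pi} \<times> {0..pi}) z * (v (snd z) - v (fst z))\<^sup>2)"
    and integral_square_sq_diff: "integral\<^sup>L (lborel \<Otimes>\<^sub>M lborel)
      (\<lambda>z. indicator ({0..pi} \<times> {0..pi}) z * (v (snd z) - v (fst z))\<^sup>2)
      = 2 * pi * integral\<^sup>L lborel (\<lambda>t. indicator {0..pi} t * (v t)\<^sup>2)"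
proof -
  define F where "F = (\<lambda>t. indicator {0..pi} t * (v t)\<^sup>2)"
  define G where "G = (\<lambda>t. indicator {0..pi} t * v t)"
  define J :: "real \<Rightarrow> real" where "J = indicator {0..pi}"
  have F: "integrable lborel F" and G: "integrable lborel G" and J: "integrable lborel J"
    using L2_0_integrable_sq[OF assms] L2_0_integrable[OF assms]
    by (auto simp: F_def G_def J_def intro!: integrable_real_indicator)
  have expand: "indicator ({0..pi} \<times> {0..pi}) z * (v (snd z) - v (fst z))\<^sup>2
      = F (fst z) * J (snd z) + J (fst z) * F (snd z) - 2 * (G (fst z) * G (snd z))" for z
    by (cases z) (simp add: F_def G_def J_def indicator_def power2_eq_square algebra_simps)
  note prod = lborel_pair.integrable_mult_fst_snd lborel_pair.integral_mult_fst_snd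
  show "integrable (lborel \<Otimes>\<^sub>M lborel) (\<lambda>z. indicator ({0..pi} \<times> {0..pi}) z * (v (snd z) - v (fst z))\<^sup>2)"
    unfolding expand using F G J by (auto intro!: prod)
  show "integral\<^sup>L (lborel \<Otimes>\<^sub>M lborel) (\<lambda>z. indicator ({0..pi} \<times> {0..pi}) z * (v (snd z) - v (fst z))\<^sup>2)
      = 2 * pi * integral\<^sup>L lborel F"
    unfolding expand using F G J L2_0_integral_eq_0[OF assms]
    by (simp add: prod G_def[symmetric] J_def)
qed

lemma
  assumes "v \<in> L2_0"
  shows integrable_triangle_sq_diff: "integrable (lborel \<Otimes>\<^sub>M lborel)
      (\<lambda>z. indicator triangle z * (v (snd z) - v (fst z))\<^sup>2)"
    and integral_triangle_sq_diff: "integral\<^sup>L (lborel \<Otimes>\<^sub>M lborel)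
      (\<lambda>z. indicator triangle z * (v (snd z) - v (fst z))\<^sup>2)
      = pi * integral\<^sup>L lborel (\<lambda>t. indicator {0..pi} t * (v t)\<^sup>2)"
proof -
  define g where "g = (\<lambda>z. indicator triangle z * (v (snd z) - v (fst z))\<^sup>2)"
  have [measurable]: "v \<in> borel_measurable lborel" using assms by (rule L2_0_measurable)
  have [measurable]: "g \<in> borel_measurable (lborel \<Otimes>\<^sub>M lborel)"
    unfolding g_def by measurable
  have split: "g z + g (snd z, fst z) = indicator ({0..pi} \<times> {0..pi}) z * (v (snd z) - v (fst z))\<^sup>2" for z
    by (cases z) (auto simp: g_def triangle_def indicator_def power2_commute)
  show int: "integrable (lborel \<Otimes>\<^sub>M lborel) g"
  proof (rule Bochner_Integration.integrable_bound[OF integrable_square_sq_diff[OF assms]])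
    show "AE z in lborel \<Otimes>\<^sub>M lborel. norm (g z)
        \<le> norm (indicator ({0..pi} \<times> {0..pi}) z * (v (snd z) - v (fst z))\<^sup>2)"
      by (intro AE_I2) (auto simp: g_def indicator_def triangle_def)
  qed measurable
  have "integral\<^sup>L (lborel \<Otimes>\<^sub>M lborel) (\<lambda>z. g (snd z, fst z)) = integral\<^sup>L (lborel \<Otimes>\<^sub>M lborel) g"
    using lborel_pair.integral_product_swap[of g] by (simp add: case_prod_beta')
  moreover have "integrable (lborel \<Otimes>\<^sub>M lborel) (\<lambda>z. g (snd z, fst z))"
    using lborel_pair.integrable_product_swap[OF int] by (simp add: case_prod_beta')
  ultimately have "2 * integral\<^sup>L (lborel \<Otimes>\<^sub>M lborel) g
      = integral\<^sup>L (lborel \<Otimes>\<^sub>M lborel) (\<lambda>z. indicator ({0..pi} \<times> {0..pi}) z * (v (snd z) - v (fst z))\<^sup>2)"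
    using int by (simp add: split[symmetric])
  then show "integral\<^sup>L (lborel \<Otimes>\<^sub>M lborel) g = pi * integral\<^sup>L lborel (\<lambda>t. indicator {0..pi} t * (v t)\<^sup>2)"
    using integral_square_sq_diff[OF assms] by simp
qed

definition near_diagonal :: "real \<Rightarrow> (real \<times> real) set" where
  "near_diagonal \<delta> = {z \<in> triangle. snd z - fst z < \<delta> \<or> pi - \<delta> < snd z - fst z}"

lemma near_diagonal_sets [measurable]: "near_diagonal \<delta> \<in> sets (lborel \<Otimes>\<^sub>M lborel)"
proof -
  have "near_diagonal \<delta> = triangle \<inter> {z \<in> space (lborel \<Otimes>\<^sub>M lborel). snd z - fst z < \<delta> \<or> pi - \<delta> < snd z - fst z}"
    by (auto simp: near_diagonal_def space_pair_measure)
  also have "\<dots> \<in> sets (lborel \<Otimes>\<^sub>M lborel)" by measurable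
  finally show ?thesis .
qed

definition near_diagonal_majorant :: "(real \<Rightarrow> real) \<Rightarrow> real \<Rightarrow> real \<times> real \<Rightarrow> real" where
  "near_diagonal_majorant F \<delta> z =
     F (fst z) * (indicator {fst z - \<delta>..fst z + \<delta>} (snd z) + indicator {pi - \<delta>..pi} (snd z))
   + F (snd z) * (indicator {snd z - \<delta>..snd z + \<delta>} (fst z) + indicator {0..\<delta>} (fst z))"

lemma
  fixes F :: "real \<Rightarrow> real"
  assumes F: "integrable lborel F" and "0 \<le> \<delta>"
  shows integrable_near_diagonal_majorant:
      "integrable (lborel \<Otimes>\<^sub>M lborel) (near_diagonal_majorant F \<delta>)"
    and integral_near_diagonal_majorant:
      "integral\<^sup>L (lborel \<Otimes>\<^sub>M lborel) (near_diagonal_majorant F \<delta>) = 6 * \<delta> * integral\<^sup>L lborel F"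
proof -
  have J: "integrable lborel (indicator {a..b} :: real \<Rightarrow> real)" for a b
    by (rule integrable_real_indicator) (auto simp: emeasure_lborel_Icc_eq)
  have eq: "near_diagonal_majorant F \<delta> = (\<lambda>z.
      F (fst z) * indicator {fst z - \<delta>..fst z + \<delta>} (snd z) + F (fst z) * indicator {pi - \<delta>..pi} (snd z)
    + F (snd z) * indicator {snd z - \<delta>..snd z + \<delta>} (fst z) + indicator {0..\<delta>} (fst z) * F (snd z))"
    by (auto simp: fun_eq_iff near_diagonal_majorant_def algebra_simps)
  note parts = integrable_strip[OF F assms(2)] integrable_strip'[OF F assms(2)]
    lborel_pair.integrable_mult_fst_snd[OF F J] lborel_pair.integrable_mult_fst_snd[OF J F]
  show "integrable (lborel \<Otimes>\<^sub>M lborel) (near_diagonal_majorant F \<delta>)"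
    unfolding eq using parts by (intro Bochner_Integration.integrable_add)
  show "integral\<^sup>L (lborel \<Otimes>\<^sub>M lborel) (near_diagonal_majorant F \<delta>) = 6 * \<delta> * integral\<^sup>L lborel F"
    unfolding eq using parts assms(2)
    by (simp add: integral_strip[OF F assms(2)] integral_strip'[OF F assms(2)]
        lborel_pair.integral_mult_fst_snd[OF F J] lborel_pair.integral_mult_fst_snd[OF J F])
qed

lemma near_diagonal_majorant_nonneg: "(\<And>t. 0 \<le> F t) \<Longrightarrow> 0 \<le> near_diagonal_majorant F \<delta> z"
  unfolding near_diagonal_majorant_def by (intro add_nonneg_nonneg mult_nonneg_nonneg) auto

lemma sq_diff_le_near_diagonal_majorant:
  assumes "z \<in> near_diagonal \<delta>"
  shows "(v (snd z) - v (fst z))\<^sup>2 \<le> 2 * near_diagonal_majorant (\<lambda>t. indicator {0..pi} t * (v t)\<^sup>2) \<delta> z"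
proof -
  define F where "F = (\<lambda>t. indicator {0..pi} t * (v t)\<^sup>2 :: real)"
  have "F (fst z) + F (snd z) \<le> near_diagonal_majorant F \<delta> z"
    using assms zero_le_power2[of "v (fst z)"] zero_le_power2[of "v (snd z)"]
    by (auto simp: F_def near_diagonal_majorant_def near_diagonal_def triangle_def indicator_def)
  moreover have "(v (snd z) - v (fst z))\<^sup>2 \<le> 2 * (F (fst z) + F (snd z))"
    using assms sq_diff_le[of "v (snd z)" "v (fst z)"]
    by (auto simp: F_def near_diagonal_def triangle_def)
  ultimately show ?thesis by (simp add: F_def)
qed

lemma
  assumes "v \<in> L2_0" and "0 \<le> \<delta>"
  shows integrable_near_diagonal_sq_diff: "integrable (lborel \<Otimes>\<^sub>M lborel)
      (\<lambda>z. indicator (near_diagonal \<delta>) z * (v (snd z) - v (fst z))\<^sup>2)"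
    and integral_near_diagonal_sq_diff_le: "integral\<^sup>L (lborel \<Otimes>\<^sub>M lborel)
      (\<lambda>z. indicator (near_diagonal \<delta>) z * (v (snd z) - v (fst z))\<^sup>2)
      \<le> 12 * \<delta> * integral\<^sup>L lborel (\<lambda>t. indicator {0..pi} t * (v t)\<^sup>2)"
proof -
  have [measurable]: "v \<in> borel_measurable lborel" using assms(1) by (rule L2_0_measurable)
  define F where "F = (\<lambda>t. indicator {0..pi} t * (v t)\<^sup>2 :: real)"
  define W where "W = near_diagonal_majorant F \<delta>"
  have F: "integrable lborel F" unfolding F_def using assms(1) by (rule L2_0_integrable_sq)
  have W: "integrable (lborel \<Otimes>\<^sub>M lborel) W" "integral\<^sup>L (lborel \<Otimes>\<^sub>M lborel) W = 6 * \<delta> * integral\<^sup>L lborel F"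
    unfolding W_def using F assms(2) by (rule integrable_near_diagonal_majorant, rule integral_near_diagonal_majorant)
  have bound: "indicator (near_diagonal \<delta>) z * (v (snd z) - v (fst z))\<^sup>2 \<le> 2 * W z" for z
    using sq_diff_le_near_diagonal_majorant[of z \<delta> v] near_diagonal_majorant_nonneg[of F \<delta> z]
    by (auto simp: W_def F_def indicator_def)
  show int: "integrable (lborel \<Otimes>\<^sub>M lborel) (\<lambda>z. indicator (near_diagonal \<delta>) z * (v (snd z) - v (fst z))\<^sup>2)"
    by (intro Bochner_Integration.integrable_bound[OF integrable_mult_right[OF W(1), of 2] _ AE_I2])
      (auto intro: order_trans[OF bound abs_ge_self])
  show "integral\<^sup>L (lborel \<Otimes>\<^sub>M lborel) (\<lambda>z. indicator (near_diagonal \<delta>) z * (v (snd z) - v (fst z))\<^sup>2)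
      \<le> 12 * \<delta> * integral\<^sup>L lborel F"
    using integral_mono[OF int integrable_mult_right[OF W(1), of 2] bound] W(2) by simp
qed

lemma iterated_integral_triangle:
  fixes H :: "real \<times> real \<Rightarrow> real"
  assumes "integrable (lborel \<Otimes>\<^sub>M lborel) (\<lambda>z. indicator triangle z * H z)"
  shows "(LBINT a:{0..pi}. LBINT b:{a..pi}. H (a, b))
    = integral\<^sup>L (lborel \<Otimes>\<^sub>M lborel) (\<lambda>z. indicator triangle z * H z)"
proof -
  have "(LBINT a:{0..pi}. LBINT b:{a..pi}. H (a, b))
      = (\<integral>a. (\<integral>b. indicator triangle (a, b) * H (a, b) \<partial>lborel) \<partial>lborel)"
    unfolding set_lebesgue_integral_def
  proof (intro Bochner_Integration.integral_cong refl)
    fix a :: real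
    show "indicator {0..pi} a *\<^sub>R (\<integral>b. indicator {a..pi} b *\<^sub>R H (a, b) \<partial>lborel)
        = (\<integral>b. indicator triangle (a, b) * H (a, b) \<partial>lborel)"
    proof (cases "a \<in> {0..pi}")
      case False
      then have "(\<lambda>b. indicator triangle (a, b) * H (a, b)) = (\<lambda>b. 0)"
        by (auto simp: triangle_def fun_eq_iff)
      with False show ?thesis by simp
    qed (auto simp: triangle_def indicator_def intro!: Bochner_Integration.integral_cong)
  qed
  also have "\<dots> = integral\<^sup>L (lborel \<Otimes>\<^sub>M lborel) (\<lambda>z. indicator triangle z * H z)"
    using lborel_pair.integral_fst'[OF assms] by simp
  finally show ?thesis .
qed

lemma integrable_triangle_bounded_sq_diff:
  fixes K :: "real \<Rightarrow> real \<Rightarrow> real"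
  assumes v: "v \<in> L2_0"
    and K_measurable [measurable]: "(\<lambda>z. K (fst z) (snd z)) \<in> borel_measurable (lborel \<Otimes>\<^sub>M lborel)"
    and K_bounded: "\<And>z. z \<in> triangle \<Longrightarrow> \<bar>K (fst z) (snd z)\<bar> \<le> B"
  shows "integrable (lborel \<Otimes>\<^sub>M lborel)
    (\<lambda>z. indicator triangle z * (K (fst z) (snd z) * (v (snd z) - v (fst z))\<^sup>2))"
proof (rule Bochner_Integration.integrable_bound[OF integrable_mult_right[OF integrable_triangle_sq_diff[OF v], of B]])
  have [measurable]: "v \<in> borel_measurable lborel" using v by (rule L2_0_measurable)
  show "(\<lambda>z. indicator triangle z * (K (fst z) (snd z) * (v (snd z) - v (fst z))\<^sup>2))
      \<in> borel_measurable (lborel \<Otimes>\<^sub>M lborel)"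
    by measurable
  have "0 \<le> B" using K_bounded[of "(0, 0)"] by (simp add: triangle_def)
  then show "AE z in lborel \<Otimes>\<^sub>M lborel. norm (indicator triangle z * (K (fst z) (snd z) * (v (snd z) - v (fst z))\<^sup>2))
      \<le> norm (B * (indicator triangle z * (v (snd z) - v (fst z))\<^sup>2))"
    using K_bounded by (intro AE_I2) (auto simp: indicator_def abs_mult mult_right_mono)
qed

lemma quadratic_form_lower_bound:
  fixes K :: "real \<Rightarrow> real \<Rightarrow> real"
  assumes v: "v \<in> L2_0"
    and K_measurable [measurable]: "(\<lambda>z. K (fst z) (snd z)) \<in> borel_measurable (lborel \<Otimes>\<^sub>M lborel)"
    and K_bounded: "\<And>z. z \<in> triangle \<Longrightarrow> \<bar>K (fst z) (snd z)\<bar> \<le> B"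
    and K_lower: "AE a in lborel. AE b in lborel. (a, b) \<in> triangle \<longrightarrow>
      - k \<le> K a b \<and> ((a, b) \<notin> near_diagonal \<delta> \<longrightarrow> k \<le> K a b)"
    and "0 \<le> k" and "0 \<le> \<delta>"
  shows "(1 - 24 * \<delta> / pi) * k * (L2norm v)\<^sup>2 \<le> (LBINT a:{0..pi}. LBINT b:{a..pi}. K a b * (v b - v a)\<^sup>2)"
proof -
  have [measurable]: "v \<in> borel_measurable lborel" using v by (rule L2_0_measurable)
  define I where "I = integral\<^sup>L lborel (\<lambda>t. indicator {0..pi} t * (v t)\<^sup>2)"
  define g where "g = (\<lambda>z. (v (snd z) - v (fst z))\<^sup>2)"
  define Q where "Q = (\<lambda>z. indicator triangle z * (K (fst z) (snd z) * g z))"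
  have T: "integrable (lborel \<Otimes>\<^sub>M lborel) (\<lambda>z. indicator triangle z * g z)"
    and T_eq: "integral\<^sup>L (lborel \<Otimes>\<^sub>M lborel) (\<lambda>z. indicator triangle z * g z) = pi * I"
    unfolding g_def I_def using v by (rule integrable_triangle_sq_diff, rule integral_triangle_sq_diff)
  have N: "integrable (lborel \<Otimes>\<^sub>M lborel) (\<lambda>z. indicator (near_diagonal \<delta>) z * g z)"
    and N_le: "integral\<^sup>L (lborel \<Otimes>\<^sub>M lborel) (\<lambda>z. indicator (near_diagonal \<delta>) z * g z) \<le> 12 * \<delta> * I"
    unfolding g_def I_def using v \<open>0 \<le> \<delta>\<close>
    by (rule integrable_near_diagonal_sq_diff, rule integral_near_diagonal_sq_diff_le)
  have Q: "integrable (lborel \<Otimes>\<^sub>M lborel) Q"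
    unfolding Q_def g_def using v K_measurable K_bounded by (rule integrable_triangle_bounded_sq_diff)
  have "AE z in lborel \<Otimes>\<^sub>M lborel. z \<in> triangle \<longrightarrow>
      - k \<le> K (fst z) (snd z) \<and> (z \<notin> near_diagonal \<delta> \<longrightarrow> k \<le> K (fst z) (snd z))"
  proof (rule lborel_pair.AE_pair_measure)
    show "{z \<in> space (lborel \<Otimes>\<^sub>M lborel). z \<in> triangle \<longrightarrow>
        - k \<le> K (fst z) (snd z) \<and> (z \<notin> near_diagonal \<delta> \<longrightarrow> k \<le> K (fst z) (snd z))}
        \<in> sets (lborel \<Otimes>\<^sub>M lborel)"
      by measurable
  qed (use K_lower in simp)
  then have "AE z in lborel \<Otimes>\<^sub>M lborel.
      k * (indicator triangle z * g z) - 2 * k * (indicator (near_diagonal \<delta>) z * g z) \<le> Q z"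
  proof eventually_elim
    case (elim z)
    have "g z \<ge> 0" by (simp add: g_def)
    then show ?case
      using elim mult_right_mono[of "- k" "K (fst z) (snd z)" "g z"] mult_right_mono[of k "K (fst z) (snd z)" "g z"]
      by (auto simp: Q_def indicator_def near_diagonal_def)
  qed
  from integral_mono_AE[OF _ Q this] T N
  have "k * (pi * I) - 2 * k * integral\<^sup>L (lborel \<Otimes>\<^sub>M lborel) (\<lambda>z. indicator (near_diagonal \<delta>) z * g z)
      \<le> integral\<^sup>L (lborel \<Otimes>\<^sub>M lborel) Q"
    by (simp add: T_eq)
  moreover have "2 * k * integral\<^sup>L (lborel \<Otimes>\<^sub>M lborel) (\<lambda>z. indicator (near_diagonal \<delta>) z * g z)
      \<le> 2 * k * (12 * \<delta> * I)"
    using N_le \<open>0 \<le> k\<close> by (intro mult_left_mono) auto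
  moreover have "(LBINT a:{0..pi}. LBINT b:{a..pi}. K a b * (v b - v a)\<^sup>2) = integral\<^sup>L (lborel \<Otimes>\<^sub>M lborel) Q"
    using iterated_integral_triangle[of "\<lambda>z. K (fst z) (snd z) * g z"] Q by (simp add: Q_def g_def)
  moreover have "(1 - 24 * \<delta> / pi) * k * (pi * I) = k * (pi * I) - 2 * k * (12 * \<delta> * I)"
    by (simp add: field_simps)
  ultimately show ?thesis
    unfolding L2norm_sq I_def[symmetric] by linarith
qed

lemma integral_kernel_lower_bound:
  assumes r: "0 < r" and h: "h \<in> S2_plus \<inter> E_r r" and f: "f \<in> E_S1"
    and \<eta>: "\<eta> \<in> L2_0" and v: "v \<in> L2_0"
    and close: "\<And>x. \<bar>f x - h x\<bar> \<le> \<epsilon>" and \<eta>_small: "AE t in lborel. \<bar>\<eta> t\<bar> \<le> \<epsilon>"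
    and \<epsilon>: "\<epsilon> \<le> r / 2" "4 * \<epsilon> \<le> sin r * \<delta>" "16 * \<epsilon> \<le> (sin r * sin \<delta>)\<^sup>2"
      "2 * \<epsilon> / sin (r / 2) ^ 4 \<le> kernel_const r \<delta>"
    and "0 < \<delta>"
  shows "(1 - 24 * \<delta> / pi) * kernel_const r \<delta> * (L2norm v)\<^sup>2
    \<le> (LBINT a:{0..pi}. LBINT b:{a..pi}. kernel f h \<eta> a b * (v b - v a)\<^sup>2)"
proof (rule quadratic_form_lower_bound[OF v])
  have [measurable]: "f \<in> borel_measurable borel" "nu h \<in> borel_measurable borel" "\<eta> \<in> borel_measurable borel"
    using f nu_measurable[OF r h] L2_0_measurable[OF \<eta>]
    by (auto simp: E_S1_def intro: borel_measurable_continuous_onI lipschitz_on_continuous_on)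
  show "(\<lambda>z. kernel f h \<eta> (fst z) (snd z)) \<in> borel_measurable (lborel \<Otimes>\<^sub>M lborel)"
    unfolding kernel_def p2_def by measurable
  show "\<bar>kernel f h \<eta> (fst z) (snd z)\<bar> \<le> 1 / sin (r / 2) ^ 4" if "z \<in> triangle" for z
    using that by (intro kernel_abs_le[OF r h f close \<epsilon>(1)]) (auto simp: triangle_def)
  have "0 \<le> \<epsilon>" using close[of 0] by simp
  then have "0 \<le> 2 * \<epsilon> / sin (r / 2) ^ 4" by simp
  then show "0 \<le> kernel_const r \<delta>" using \<epsilon>(4) by linarith
  show "AE a in lborel. AE b in lborel. (a, b) \<in> triangle \<longrightarrow>
      - kernel_const r \<delta> \<le> kernel f h \<eta> a b \<and>
      ((a, b) \<notin> near_diagonal \<delta> \<longrightarrow> kernel_const r \<delta> \<le> kernel f h \<eta> a b)"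
    using \<eta>_small
  proof eventually_elim
    case (elim a)
    note \<eta>_a = elim
    show ?case
      using \<eta>_small
    proof eventually_elim
      case (elim b)
      have "- kernel_const r \<delta> \<le> kernel f h \<eta> a b" if "(a, b) \<in> triangle"
        using kernel_ge[OF r h f close \<epsilon>(1), of \<eta> a b] \<eta>_a elim that \<epsilon>(4)
        by (auto simp: triangle_def)
      moreover have "kernel_const r \<delta> \<le> kernel f h \<eta> a b"
        if "(a, b) \<in> triangle" "(a, b) \<notin> near_diagonal \<delta>"
        using kernel_ge_off_diagonal[OF r h f close \<epsilon>(1), of \<eta> a b \<delta>] \<eta>_a elim that \<open>0 < \<delta>\<close> \<epsilon>(2,3)
        by (auto simp: near_diagonal_def)
      ultimately show ?case by blast
    qed
  qed
qed (use \<open>0 < \<delta>\<close> in simp)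

theorem lemma4p7:
  fixes r :: real
  assumes "0 < r" and "r < pi / 2"
  shows "\<exists>\<epsilon>>0. \<exists>c>0. \<forall>h \<eta> f.
     h \<in> S2_plus \<inter> E_r r \<longrightarrow> \<eta> \<in> L2_0 \<longrightarrow> f \<in> E_S1 \<longrightarrow>
     (\<forall>a. \<bar>f a - h a\<bar> \<le> \<epsilon>) \<longrightarrow> (AE t in lborel. \<bar>\<eta> t\<bar> \<le> \<epsilon>) \<longrightarrow>
     (\<forall>v \<in> L2_0.
        (LBINT a:{0..pi}. (LBINT b:{a..pi}.
            p2 f a b * sin ((nu h b - nu h a) + (\<eta> b - \<eta> a)) * (v b - v a)\<^sup>2))
        \<ge> c * (L2norm v)\<^sup>2)"
proof -
  define \<delta> where "\<delta> = pi / 48"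
  define k where "k = kernel_const r \<delta>"
  define \<epsilon> where "\<epsilon> = min (r / 2) (min (sin r * \<delta> / 4) (min ((sin r * sin \<delta>)\<^sup>2 / 16) (k * sin (r / 2) ^ 4 / 2)))"
  have "0 < k" unfolding k_def using assms by (intro kernel_const_pos) (auto simp: \<delta>_def)
  moreover have "0 < sin r" "0 < sin \<delta>" "0 < sin (r / 2)"
    using assms by (auto simp: \<delta>_def intro!: sin_gt_zero)
  ultimately have "0 < \<epsilon>" "2 * \<epsilon> / sin (r / 2) ^ 4 \<le> k"
    using assms by (simp_all add: \<epsilon>_def \<delta>_def field_simps)
  moreover have "k / 2 * (L2norm v)\<^sup>2 \<le> (LBINT a:{0..pi}. LBINT b:{a..pi}. kernel f h \<eta> a b * (v b - v a)\<^sup>2)"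
    if "h \<in> S2_plus \<inter> E_r r" "\<eta> \<in> L2_0" "f \<in> E_S1" "\<forall>a. \<bar>f a - h a\<bar> \<le> \<epsilon>"
      "AE t in lborel. \<bar>\<eta> t\<bar> \<le> \<epsilon>" "v \<in> L2_0" for h \<eta> f v
    using integral_kernel_lower_bound[OF \<open>0 < r\<close> that(1,3,2,6), of \<epsilon> \<delta>] that(4,5) calculation(2)
    by (simp add: k_def \<epsilon>_def \<delta>_def)
  ultimately show ?thesis
    using \<open>0 < k\<close> unfolding kernel_def
    by (intro exI[of _ \<epsilon>] conjI exI[of _ "k / 2"] allI impI ballI) auto
qed

end
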